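(* Let $\mathbf z$ be a crystal. For every $\mathbf x\in\mathcal M_\infty(\bar c(\mathbf z))$, $$\|\mathbf h(\mathbf x)\|_\infty\le R(\mathbf z)\,\|\nabla\mathbf h(\mathbf x)\|_\infty.$$ In particular, for $0<c\le\bar c(\mathbf z)/R(\mathbf z)$ every $\mathbf x$ for which $\mathbf h(\mathbf x)$ is defined and $\|\nabla\mathbf h(\mathbf x)\|_\infty\le c$ lies in $\mathcal M_\infty(R(\mathbf z)c)\subset\mathcal M_\infty(\bar c(\mathbf z))$, so $\mathcal M^\nabla_\infty(c)$ is well defined.
   Context: Fix $a>0$, $b>0$. A crystal is $\mathbf z=(z_i)_{i=1}^N\in(\mathbb R^d)^N$ with $|z_i-z_j|=a$ or $>b$ for all $i\ne j$; pairs at distance $a$ are neighboring, $\langle i,j\rangle$. $\mathcal M=\{(\theta z_i+\eta)_i:\theta\in SO(d),\eta\in\mathbb R^d\}$. $\bar c(\mathbf z)>0$ is a constant such that every $\mathbf x$ with $\inf_{\mathbf y\in\mathcal M}\max_i|x_i-y_i|\le\bar c(\mathbf z)$ has a unique minimizer $\mathbf z(\mathbf x)\in\mathcal M$ of $(\sum_i|x_i-y_i|^2)^{1/2}$; $\mathbf h(\mathbf x)=\mathbf x-\mathbf z(\mathbf x)$. $\|\mathbf h\|_\infty=\max_i|h_i|$, $\|\nabla\mathbf h\|_\infty=\max_{\langle i,j\rangle}|h_i-h_j|$; $\mathcal M_\infty(c)=\{\mathbf x:\|\mathbf h(\mathbf x)\|_\infty\le c\}$, $\mathcal M^\nabla_\infty(c)=\{\mathbf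 x:\|\nabla\mathbf h(\mathbf x)\|_\infty\le c\}$. $R(\mathbf z)$ is the maximum over $i\ne j$ of the length (number of steps) of a shortest path $i=i_0\sim i_1\sim\cdots\sim i_n=j$ with each $\langle i_k,i_{k+1}\rangle$ neighboring ($+\infty$ if none exists). *)

theory Defs
  imports "HOL-Analysis.Analysis" "HOL-Library.Extended_Nat"
begin

(* Configurations of N points in R^d: maps from a finite index type 'i
   (N = CARD('i)) to real^'d. *)

definition crystal :: "real \<Rightarrow> real \<Rightarrow> ('i::finite \<Rightarrow> real^'d) \<Rightarrow> bool" where
  "crystal a b z \<longleftrightarrow> (\<forall>i j. i \<noteq> j \<longrightarrow> dist (z i) (z j) = a \<or> dist (z i) (z j) > b)"

definition nbr :: "real \<Rightarrow> ('i::finite \<Rightarrow> real^'d) \<Rightarrow> 'i \<Rightarrow> 'i \<Rightarrow> bool" where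
  "nbr a z i j \<longleftrightarrow> i \<noteq> j \<and> dist (z i) (z j) = a"

definition rigid_orbit :: "('i::finite \<Rightarrow> real^'d) \<Rightarrow> ('i \<Rightarrow> real^'d) set" where
  "rigid_orbit z = {(\<lambda>i. \<theta> *v z i + \<eta>) | \<theta> \<eta>. rotation_matrix \<theta>}"

definition supdist :: "('i::finite \<Rightarrow> real^'d) \<Rightarrow> ('i \<Rightarrow> real^'d) \<Rightarrow> real" where
  "supdist x y = Max (range (\<lambda>i. norm (x i - y i)))"

definition l2dist :: "('i::finite \<Rightarrow> real^'d) \<Rightarrow> ('i \<Rightarrow> real^'d) \<Rightarrow> real" where
  "l2dist x y = sqrt (\<Sum>i\<in>UNIV. (norm (x i - y i))\<^sup>2)"

(* x is within sup-distance c of M, i.e. h(x) is defined when c = cbar(z) *)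
definition near_orbit :: "('i::finite \<Rightarrow> real^'d) \<Rightarrow> real \<Rightarrow> ('i \<Rightarrow> real^'d) \<Rightarrow> bool" where
  "near_orbit z c x \<longleftrightarrow> (INF y\<in>rigid_orbit z. supdist x y) \<le> c"

definition is_l2_minimizer :: "('i::finite \<Rightarrow> real^'d) \<Rightarrow> ('i \<Rightarrow> real^'d) \<Rightarrow> ('i \<Rightarrow> real^'d) \<Rightarrow> bool" where
  "is_l2_minimizer z x y \<longleftrightarrow> y \<in> rigid_orbit z \<and> (\<forall>y'\<in>rigid_orbit z. l2dist x y \<le> l2dist x y')"

(* the defining property of the constant cbar(z) *)
definition admissible_cbar :: "('i::finite \<Rightarrow> real^'d) \<Rightarrow> real \<Rightarrow> bool" where
  "admissible_cbar z c \<longleftrightarrow> c > 0 \<and> (\<forall>x. near_orbit z c x \<longrightarrow> (\<exists>!y. is_l2_minimizer z x y))"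

definition zproj :: "('i::finite \<Rightarrow> real^'d) \<Rightarrow> ('i \<Rightarrow> real^'d) \<Rightarrow> ('i \<Rightarrow> real^'d)" where
  "zproj z x = (THE y. is_l2_minimizer z x y)"

definition hvec :: "('i::finite \<Rightarrow> real^'d) \<Rightarrow> ('i \<Rightarrow> real^'d) \<Rightarrow> ('i \<Rightarrow> real^'d)" where
  "hvec z x = (\<lambda>i. x i - zproj z x i)"

definition hnorm :: "('i::finite \<Rightarrow> real^'d) \<Rightarrow> real" where
  "hnorm h = Max (range (\<lambda>i. norm (h i)))"

definition gradnorm :: "real \<Rightarrow> ('i::finite \<Rightarrow> real^'d) \<Rightarrow> ('i \<Rightarrow> real^'d) \<Rightarrow> real" where
  "gradnorm a z h = Max ({0} \<union> {norm (h i - h j) | i j. nbr a z i j})"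

definition Minf :: "('i::finite \<Rightarrow> real^'d) \<Rightarrow> real \<Rightarrow> real \<Rightarrow> ('i \<Rightarrow> real^'d) set" where
  "Minf z cbar c = {x. near_orbit z cbar x \<and> hnorm (hvec z x) \<le> c}"

definition graph_dist :: "real \<Rightarrow> ('i::finite \<Rightarrow> real^'d) \<Rightarrow> 'i \<Rightarrow> 'i \<Rightarrow> enat" where
  "graph_dist a z i j =
     (if \<exists>n. (nbr a z ^^ n) i j then enat (LEAST n. (nbr a z ^^ n) i j) else \<infinity>)"

(* R(z) = max over i \<noteq> j of the graph distance (0 if N = 1) *)
definition Rz :: "real \<Rightarrow> ('i::finite \<Rightarrow> real^'d) \<Rightarrow> enat" where
  "Rz a z = (SUP p\<in>{(i, j). i \<noteq> j}. graph_dist a z (fst p) (snd p))"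

end

theory Submission
  imports Defs
begin

text \<open>Translations belong to the rigid orbit, so the least-squares fit \<open>zproj z x\<close> has the
  same centre of mass as \<open>x\<close>, i.e. the displacement \<open>h\<close> sums to zero. A centred family is
  bounded by its oscillation, \<open>\<bar>h i\<bar> \<le> max\<^sub>j \<bar>h i - h j\<bar>\<close>, and every difference \<open>h i - h j\<close>
  telescopes along a neighbour path of at most \<open>R(z)\<close> steps, each bounded by \<open>\<parallel>\<nabla>h\<parallel>\<^sub>\<infinity>\<close>.\<close>

lemma norm_diff_le_relpow:
  fixes h :: "'a \<Rightarrow> 'b::real_normed_vector"
  assumes step: "\<And>i j. E i j \<Longrightarrow> norm (h i - h j) \<le> G"
    and path: "(E ^^ n) i j"
  shows "norm (h i - h j) \<le> real n * G"
  using path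
proof (induction n arbitrary: j)
  case 0
  then show ?case by simp
next
  case (Suc n)
  then obtain k where ik: "(E ^^ n) i k" and kj: "E k j" by auto
  have "norm (h i - h j) \<le> norm (h i - h k) + norm (h k - h j)"
    using norm_triangle_ineq[of "h i - h k" "h k - h j"] by simp
  also have "\<dots> \<le> real n * G + G" using Suc.IH[OF ik] step[OF kj] by simp
  finally show ?case by (simp add: algebra_simps)
qed

lemma sum_eq_0_if_translation_minimal:
  fixes h :: "'i \<Rightarrow> 'b::real_inner"
  assumes "finite I" "I \<noteq> {}"
    and minimal: "\<And>m. (\<Sum>i\<in>I. (norm (h i))\<^sup>2) \<le> (\<Sum>i\<in>I. (norm (h i - m))\<^sup>2)"
  shows "(\<Sum>i\<in>I. h i) = 0"
proof -
  define S where "S = (\<Sum>i\<in>I. h i)"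
  define N where "N = real (card I)"
  have N: "N > 0" using assms(1,2) by (simp add: N_def card_gt_0_iff)
  define m where "m = S /\<^sub>R N"
  have "(\<Sum>i\<in>I. (norm (h i - m))\<^sup>2) = (\<Sum>i\<in>I. (norm (h i))\<^sup>2 - 2 * (h i \<bullet> m) + (norm m)\<^sup>2)"
    by (intro sum.cong refl) (simp add: power2_norm_eq_inner inner_diff algebra_simps inner_commute)
  also have "\<dots> = (\<Sum>i\<in>I. (norm (h i))\<^sup>2) - 2 * (S \<bullet> m) + N * (norm m)\<^sup>2"
    by (simp add: sum.distrib sum_subtractf S_def inner_sum_left sum_distrib_left N_def)
  also have "S \<bullet> m = N * (norm m)\<^sup>2"
  proof -
    have "S = N *\<^sub>R m" using N by (simp add: m_def)
    then show ?thesis by (simp add: power2_norm_eq_inner)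
  qed
  finally have "N * (norm m)\<^sup>2 \<le> 0" using minimal[of m] by simp
  with N have "m = 0" by (simp add: mult_le_0_iff)
  with N show ?thesis by (simp add: m_def S_def)
qed

lemma norm_le_if_sum_eq_0:
  fixes h :: "'i \<Rightarrow> 'b::real_normed_vector"
  assumes "finite I" "i \<in> I" and centred: "(\<Sum>j\<in>I. h j) = 0"
    and osc: "\<And>j. j \<in> I \<Longrightarrow> norm (h i - h j) \<le> C"
  shows "norm (h i) \<le> C"
proof -
  define N where "N = real (card I)"
  have N: "N > 0" using assms(1,2) by (auto simp: N_def card_gt_0_iff)
  have "(\<Sum>j\<in>I. h i - h j) = N *\<^sub>R h i"
    using centred by (simp add: sum_subtractf N_def sum_constant_scaleR del: sum_constant)
  hence "N * norm (h i) = norm (\<Sum>j\<in>I. h i - h j)" using N by simp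
  also have "\<dots> \<le> (\<Sum>j\<in>I. norm (h i - h j))" by (rule norm_sum)
  also have "\<dots> \<le> N * C" using osc sum_mono[of I "\<lambda>j. norm (h i - h j)" "\<lambda>_. C"]
    by (simp add: N_def)
  finally show ?thesis using N by simp
qed

lemma finite_nbr_diffs:
  fixes h z :: "'i::finite \<Rightarrow> real^'d"
  shows "finite {norm (h i - h j) |i j. nbr a z i j}"
proof -
  have "{norm (h i - h j) |i j. nbr a z i j} \<subseteq> (\<lambda>(i, j). norm (h i - h j)) ` UNIV"
    by auto
  thus ?thesis by (rule finite_subset) simp
qed

lemma gradnorm_ge: "nbr a z i j \<Longrightarrow> norm (h i - h j) \<le> gradnorm a z h"
  unfolding gradnorm_def by (rule Max_ge) (auto simp: finite_nbr_diffs)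

lemma gradnorm_nonneg: "0 \<le> gradnorm a z h"
  unfolding gradnorm_def by (rule Max_ge) (auto simp: finite_nbr_diffs)

lemma relpow_nbr_if_Rz_eq_enat:
  assumes "Rz a z = enat r"
  obtains n where "n \<le> r" "(nbr a z ^^ n) i j"
proof (cases "i = j")
  case True
  then show ?thesis using that[of 0] by simp
next
  case False
  have dist: "graph_dist a z i j \<le> enat r"
    unfolding assms[symmetric] Rz_def by (rule SUP_upper2[of "(i, j)"]) (use False in auto)
  have ex: "\<exists>n. (nbr a z ^^ n) i j"
  proof (rule ccontr)
    assume "\<not> ?thesis"
    with dist show False unfolding graph_dist_def by simp
  qed
  define n where "n = (LEAST n. (nbr a z ^^ n) i j)"
  have "(nbr a z ^^ n) i j" unfolding n_def using ex by (rule LeastI_ex)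
  moreover have "n \<le> r"
    using dist ex unfolding graph_dist_def n_def by simp
  ultimately show ?thesis using that by blast
qed

lemma zproj_is_l2_minimizer:
  assumes "admissible_cbar z cbar" "near_orbit z cbar x"
  shows "is_l2_minimizer z x (zproj z x)"
proof -
  have "\<exists>!y. is_l2_minimizer z x y" using assms unfolding admissible_cbar_def by blast
  then show ?thesis unfolding zproj_def by (rule theI')
qed

lemma sum_hvec_eq_0:
  fixes z :: "'i::finite \<Rightarrow> real^'d"
  assumes "admissible_cbar z cbar" "near_orbit z cbar x"
  shows "(\<Sum>i\<in>UNIV. hvec z x i) = 0"
proof (rule sum_eq_0_if_translation_minimal)
  fix m :: "real^'d"
  define y where "y = zproj z x"
  have min: "is_l2_minimizer z x y"
    unfolding y_def using assms by (rule zproj_is_l2_minimizer)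
  then obtain \<theta> \<eta> where rot: "rotation_matrix \<theta>" and y: "y = (\<lambda>i. \<theta> *v z i + \<eta>)"
    unfolding is_l2_minimizer_def rigid_orbit_def by blast
  have "(\<lambda>i. y i + m) = (\<lambda>i. \<theta> *v z i + (\<eta> + m))" by (simp add: y add.assoc)
  with rot have "(\<lambda>i. y i + m) \<in> rigid_orbit z" unfolding rigid_orbit_def by blast
  with min have "l2dist x y \<le> l2dist x (\<lambda>i. y i + m)" unfolding is_l2_minimizer_def by blast
  moreover have "hvec z x i = x i - y i" for i unfolding hvec_def y_def ..
  ultimately show "(\<Sum>i\<in>UNIV. (norm (hvec z x i))\<^sup>2) \<le> (\<Sum>i\<in>UNIV. (norm (hvec z x i - m))\<^sup>2)"
    unfolding l2dist_def by (simp add: diff_diff_eq)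
qed auto

lemma hnorm_hvec_le_Rz_gradnorm:
  fixes z :: "'i::finite \<Rightarrow> real^'d"
  assumes adm: "admissible_cbar z cbar" and near: "near_orbit z cbar x"
    and R: "Rz a z = enat r"
  shows "hnorm (hvec z x) \<le> real r * gradnorm a z (hvec z x)"
proof -
  define h where "h = hvec z x"
  define G where "G = gradnorm a z h"
  have osc: "norm (h i - h j) \<le> real r * G" for i j
  proof -
    obtain n where "n \<le> r" and path: "(nbr a z ^^ n) i j"
      using R by (rule relpow_nbr_if_Rz_eq_enat)
    have "norm (h i - h j) \<le> real n * G"
      by (rule norm_diff_le_relpow[where E = "nbr a z", OF _ path]) (simp add: G_def gradnorm_ge)
    also have "\<dots> \<le> real r * G"
      using \<open>n \<le> r\<close> gradnorm_nonneg[of a z h] by (simp add: G_def mult_right_mono)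
    finally show ?thesis .
  qed
  have "norm (h i) \<le> real r * G" for i
  proof (rule norm_le_if_sum_eq_0[of UNIV i h])
    show "(\<Sum>j\<in>UNIV. h j) = 0" unfolding h_def using adm near by (rule sum_hvec_eq_0)
  qed (simp_all add: osc)
  then show ?thesis unfolding hnorm_def h_def[symmetric] G_def[symmetric]
    by (auto intro: Max.boundedI)
qed

theorem lemma2p4:
  fixes a b cbar :: real and z :: "'i::finite \<Rightarrow> real^'d"
  assumes "a > 0" and "b > 0"
    and "crystal a b z"
    and "admissible_cbar z cbar"
  shows "(\<forall>x\<in>Minf z cbar cbar. \<forall>r. Rz a z = enat r \<longrightarrow>
            hnorm (hvec z x) \<le> real r * gradnorm a z (hvec z x))
       \<and> (\<forall>c r. 0 < c \<longrightarrow> Rz a z = enat r \<longrightarrow> real r * c \<le> cbar \<longrightarrow>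
            (\<forall>x. near_orbit z cbar x \<and> gradnorm a z (hvec z x) \<le> c \<longrightarrow>
                 x \<in> Minf z cbar (real r * c))
            \<and> Minf z cbar (real r * c) \<subseteq> Minf z cbar cbar)"
proof (intro conjI ballI allI impI subsetI)
  fix x r assume "x \<in> Minf z cbar cbar" "Rz a z = enat r"
  then show "hnorm (hvec z x) \<le> real r * gradnorm a z (hvec z x)"
    using hnorm_hvec_le_Rz_gradnorm[OF assms(4)] unfolding Minf_def by blast
next
  fix c r x assume R: "Rz a z = enat r"
    and x: "near_orbit z cbar x \<and> gradnorm a z (hvec z x) \<le> c"
  have "hnorm (hvec z x) \<le> real r * gradnorm a z (hvec z x)"
    using hnorm_hvec_le_Rz_gradnorm[OF assms(4) _ R] x by blast
  also have "\<dots> \<le> real r * c" using x by (simp add: mult_left_mono)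
  finally show "x \<in> Minf z cbar (real r * c)" using x unfolding Minf_def by blast
next
  fix c r x assume "real r * c \<le> cbar" "x \<in> Minf z cbar (real r * c)"
  then show "x \<in> Minf z cbar cbar" unfolding Minf_def by auto
qed

end
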